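(* For every even integer $n\geqslant 12$, there exists a $3$-connected nonbipartite cubic graph $G$ of order $n$ with $\lambda(G)=6$.
   Context: For a vertex $v$ of a $2$-connected cubic graph $G$, a $v$-matching is a spanning subgraph in which $v$ has degree $3$ and every other vertex has degree $1$; $v$ is $\lambda$-matchable if $G$ has a $v$-matching; $\lambda(G)$ is the number of $\lambda$-matchable vertices. *)

theory Defs
  imports Main
begin

definition simple_graph :: "'a set \<Rightarrow> 'a set set \<Rightarrow> bool" where
  "simple_graph V E \<longleftrightarrow> finite V \<and>
     (\<forall>e\<in>E. \<exists>u v. e = {u, v} \<and> u \<noteq> v \<and> u \<in> V \<and> v \<in> V)"

definition degree :: "'a set set \<Rightarrow> 'a \<Rightarrow> nat" where
  "degree E v = card {e \<in> E. v \<in> e}"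

definition cubic :: "'a set \<Rightarrow> 'a set set \<Rightarrow> bool" where
  "cubic V E \<longleftrightarrow> simple_graph V E \<and> (\<forall>v\<in>V. degree E v = 3)"

definition adj_rel :: "'a set \<Rightarrow> 'a set set \<Rightarrow> ('a \<times> 'a) set" where
  "adj_rel V E = {(x, y). x \<in> V \<and> y \<in> V \<and> {x, y} \<in> E}"

definition connected_graph :: "'a set \<Rightarrow> 'a set set \<Rightarrow> bool" where
  "connected_graph V E \<longleftrightarrow> V \<noteq> {} \<and> (\<forall>u\<in>V. \<forall>w\<in>V. (u, w) \<in> (adj_rel V E)\<^sup>*)"

definition del_vertices :: "'a set set \<Rightarrow> 'a set \<Rightarrow> 'a set set" where
  "del_vertices E X = {e \<in> E. e \<inter> X = {}}"

definition k_connected :: "nat \<Rightarrow> 'a set \<Rightarrow> 'a set set \<Rightarrow> bool" where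
  "k_connected k V E \<longleftrightarrow> card V > k \<and>
     (\<forall>X. X \<subseteq> V \<and> card X < k \<longrightarrow> connected_graph (V - X) (del_vertices E X))"

definition bipartite :: "'a set \<Rightarrow> 'a set set \<Rightarrow> bool" where
  "bipartite V E \<longleftrightarrow> (\<exists>A \<subseteq> V. \<forall>e\<in>E. card (e \<inter> A) = 1)"

definition v_matching :: "'a set \<Rightarrow> 'a set set \<Rightarrow> 'a \<Rightarrow> 'a set set \<Rightarrow> bool" where
  "v_matching V E v F \<longleftrightarrow> F \<subseteq> E \<and> degree F v = 3 \<and> (\<forall>u \<in> V - {v}. degree F u = 1)"

definition lambda_matchable :: "'a set \<Rightarrow> 'a set set \<Rightarrow> 'a \<Rightarrow> bool" where
  "lambda_matchable V E v \<longleftrightarrow> v \<in> V \<and> (\<exists>F. v_matching V E v F)"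

definition lambda_num :: "'a set \<Rightarrow> 'a set set \<Rightarrow> nat" where
  "lambda_num V E = card {v \<in> V. lambda_matchable V E v}"

end

(*
  The witness is the Hamiltonian cycle 0, 1, ..., 2m + 11 together with a perfect matching of
  chords: the ladder 2i -- 2i + 3 (i <= m), the long chord 1 -- 2m + 4, and a gadget on the last
  ten vertices containing the triangle 2m + 6, 2m + 7, 2m + 8.

  Deleting two vertices a < b cuts the cycle into two arcs, and some chord always leaves the open
  arc (a, b); this gives 3-connectivity. The vertices 2m + 5, ..., 2m + 9 and 2m + 11 are
  lambda-matchable by explicit matchings.

  For the other vertices, weight every vertex by +1 or -1 according to its parity, except that the
  triangle gets weight d. Summing weights over the edges of a v-matching counts every vertex once and
  v three times. All edges except 2m + 6 -- 2m + 8 and 2m + 7 -- 2m + 11 join vertices of opposite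
  parity, so for d = 0 every edge has weight <= 0 while the total is positive when v is even and
  outside the triangle. For d = 1 every edge has weight >= 0 and the total is 0 when v <= 2m + 3 is
  odd, so a v-matching avoids the triangle's edges; this forces the partners of 2m + 6, 2m + 7 and
  2m + 8 to be 2m + 5, 2m + 11 and 2m + 9, which are all the neighbours of 2m + 10, so 2m + 10
  is left without a partner.
*)
theory Submission
  imports Defs
begin

lemma degree_1_obtain_edge:
  assumes "degree F w = 1"
  obtains e where "e \<in> F" "w \<in> e"
  using assms unfolding degree_def
  by (metis (mono_tags, lifting) card_1_singletonE mem_Collect_eq singletonI)

lemma degree_1_edge_unique:
  assumes "degree F w = 1" "e1 \<in> F" "e2 \<in> F" "w \<in> e1" "w \<in> e2"
  shows "e1 = e2"
  using assms unfolding degree_def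
  by (metis (mono_tags, lifting) card_1_singletonE mem_Collect_eq singletonD)

lemma simple_graph_edgeE:
  assumes "simple_graph V E" "e \<in> E"
  obtains x y where "e = {x, y}" "x \<noteq> y" "x \<in> V" "y \<in> V"
  using assms unfolding simple_graph_def by auto

lemma simple_graph_finite_edges:
  assumes "simple_graph V E"
  shows "finite E" and "\<And>e. e \<in> E \<Longrightarrow> e \<subseteq> V"
proof -
  show sub: "e \<subseteq> V" if "e \<in> E" for e
    using simple_graph_edgeE[OF assms that] by blast
  have "finite V" using assms by (simp add: simple_graph_def)
  have "E \<subseteq> Pow V" using sub by blast
  then show "finite E" by (rule finite_subset) (simp add: \<open>finite V\<close>)
qed

lemma sum_weighted_degree:
  fixes c :: "'a \<Rightarrow> int"
  assumes "finite V" "finite F" "\<And>e. e \<in> F \<Longrightarrow> e \<subseteq> V"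
  shows "(\<Sum>x\<in>V. c x * int (degree F x)) = (\<Sum>e\<in>F. \<Sum>x\<in>e. c x)"
proof -
  have "(\<Sum>x\<in>V. c x * int (degree F x)) = (\<Sum>x\<in>V. \<Sum>e\<in>F. if x \<in> e then c x else 0)"
    using assms(2) by (simp add: degree_def sum.If_cases Int_def mult.commute)
  also have "\<dots> = (\<Sum>e\<in>F. \<Sum>x\<in>V. if x \<in> e then c x else 0)"
    by (rule sum.swap)
  also have "\<dots> = (\<Sum>e\<in>F. \<Sum>x\<in>e. c x)"
  proof (rule sum.cong[OF refl])
    fix e assume "e \<in> F"
    then have "V \<inter> e = e" using assms(3) by blast
    then show "(\<Sum>x\<in>V. if x \<in> e then c x else 0) = (\<Sum>x\<in>e. c x)"
      using assms(1) by (simp add: sum.inter_restrict[symmetric])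
  qed
  finally show ?thesis .
qed

lemma v_matching_weight_sum:
  fixes c :: "'a \<Rightarrow> int"
  assumes G: "simple_graph V E" and v: "v \<in> V" and F: "v_matching V E v F"
  shows "(\<Sum>e\<in>F. \<Sum>x\<in>e. c x) = (\<Sum>x\<in>V. c x) + 2 * c v"
proof -
  have V: "finite V" using G by (simp add: simple_graph_def)
  have "F \<subseteq> E" using F by (simp add: v_matching_def)
  then have "(\<Sum>e\<in>F. \<Sum>x\<in>e. c x) = (\<Sum>x\<in>V. c x * int (degree F x))"
    using simple_graph_finite_edges[OF G] V
    by (intro sum_weighted_degree[symmetric]) (auto intro: finite_subset)
  also have "\<dots> = (\<Sum>x\<in>V. c x + (if x = v then 2 * c x else 0))"
    using F unfolding v_matching_def by (intro sum.cong) auto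
  also have "\<dots> = (\<Sum>x\<in>V. c x) + 2 * c v"
    using v V by (simp add: sum.distrib)
  finally show ?thesis .
qed

lemma not_lambda_matchable_by_weights:
  fixes c :: "'a \<Rightarrow> int"
  assumes "simple_graph V E"
    and "\<And>e. e \<in> E \<Longrightarrow> (\<Sum>x\<in>e. c x) \<le> 0"
    and "(\<Sum>x\<in>V. c x) + 2 * c v > 0"
  shows "\<not> lambda_matchable V E v"
proof
  assume "lambda_matchable V E v"
  then obtain F where v: "v \<in> V" and F: "v_matching V E v F"
    by (auto simp: lambda_matchable_def)
  then have "F \<subseteq> E" by (simp add: v_matching_def)
  have "(\<Sum>e\<in>F. \<Sum>x\<in>e. c x) \<le> 0"
    using assms(2) \<open>F \<subseteq> E\<close> by (simp add: sum_nonpos subset_iff)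
  then show False
    using v_matching_weight_sum[OF assms(1) v F, of c] assms(3) by simp
qed

lemma v_matching_zero_weight_edges:
  fixes c :: "'a \<Rightarrow> int"
  assumes G: "simple_graph V E" and v: "v \<in> V" and F: "v_matching V E v F"
    and nonneg: "\<And>e. e \<in> E \<Longrightarrow> (\<Sum>x\<in>e. c x) \<ge> 0"
    and total: "(\<Sum>x\<in>V. c x) + 2 * c v = 0"
    and e: "e \<in> F"
  shows "(\<Sum>x\<in>e. c x) = 0"
proof -
  have FE: "F \<subseteq> E" using F by (simp add: v_matching_def)
  then have "finite F" using simple_graph_finite_edges(1)[OF G] by (rule finite_subset)
  moreover have "(\<Sum>e\<in>F. \<Sum>x\<in>e. c x) = 0"
    using v_matching_weight_sum[OF G v F] total by simp
  ultimately show ?thesis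
    using sum_nonneg_eq_0_iff FE nonneg e by blast
qed

lemma v_matching_obtain_partner:
  assumes "simple_graph V E" "v_matching V E v F" "u \<in> V - {v}"
  obtains w where "{u, w} \<in> F"
proof -
  have "degree F u = 1" using assms(2,3) by (simp add: v_matching_def)
  then obtain e where "e \<in> F" "u \<in> e" by (rule degree_1_obtain_edge)
  have "e \<in> E" using \<open>e \<in> F\<close> assms(2) by (auto simp: v_matching_def)
  then obtain x y where "e = {x, y}" using assms(1) by (blast elim: simple_graph_edgeE)
  then have "{u, if u = x then y else x} = e" using \<open>u \<in> e\<close> by auto
  then have "{u, if u = x then y else x} \<in> F" using \<open>e \<in> F\<close> by simp
  then show ?thesis by (rule that)
qed

lemma v_matching_partner_unique:
  assumes "v_matching V E v F" "w \<in> V - {v}" "{u, w} \<in> F" "{u', w} \<in> F"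
  shows "u = u'"
proof -
  have "degree F w = 1" using assms(1,2) by (simp add: v_matching_def)
  then have "{u, w} = {u', w}" using assms(3,4) by (rule degree_1_edge_unique) simp_all
  then show ?thesis by (metis doubleton_eq_iff)
qed

lemma v_matching_of_partner:
  assumes partner: "\<And>u. u \<in> V - {v} \<Longrightarrow> p u \<noteq> u \<and> {u, p u} \<in> E"
    and involution: "\<And>u. u \<in> V - {v} \<Longrightarrow> p u \<noteq> v \<Longrightarrow> p (p u) = u"
    and centre: "card {u \<in> V - {v}. p u = v} = 3"
  shows "v_matching V E v ((\<lambda>u. {u, p u}) ` (V - {v}))"
proof -
  let ?F = "(\<lambda>u. {u, p u}) ` (V - {v})"
  have "{e \<in> ?F. v \<in> e} = (\<lambda>u. {u, v}) ` {u \<in> V - {v}. p u = v}"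
    by (auto simp: image_iff)
  moreover have "inj_on (\<lambda>u. {u, v}) {u \<in> V - {v}. p u = v}"
    by (auto simp: inj_on_def doubleton_eq_iff)
  ultimately have "degree ?F v = 3"
    unfolding degree_def using centre by (simp add: card_image)
  moreover have "degree ?F u = 1" if u: "u \<in> V - {v}" for u
  proof -
    have "{e \<in> ?F. u \<in> e} = {{u, p u}}"
    proof (intro equalityI subsetI)
      fix e assume "e \<in> {e \<in> ?F. u \<in> e}"
      then obtain w where w: "w \<in> V - {v}" "e = {w, p w}" "u \<in> e" by auto
      show "e \<in> {{u, p u}}"
      proof (cases "u = w")
        case False
        then have "u = p w" using w by auto
        then have "p u = w" using involution[OF w(1)] u by auto
        then show ?thesis using w \<open>u = p w\<close> by auto
      qed (use w in auto)
    qed (use u in auto)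
    then show ?thesis unfolding degree_def by simp
  qed
  ultimately show ?thesis unfolding v_matching_def using partner by auto
qed

lemma lambda_matchable_of_involution:
  assumes v: "v \<in> V" and nbrs: "{a, b, c} \<subseteq> V - {v}" "{v, a} \<in> E" "{v, b} \<in> E" "{v, c} \<in> E"
    and distinct: "a \<noteq> b" "a \<noteq> c" "b \<noteq> c"
    and involution: "\<And>u. u \<in> V - {v, a, b, c} \<Longrightarrow>
      p u \<in> V - {v, a, b, c} \<and> p u \<noteq> u \<and> p (p u) = u \<and> {u, p u} \<in> E"
  shows "lambda_matchable V E v"
proof -
  define q where "q u = (if u \<in> {a, b, c} then v else p u)" for u
  have "{u \<in> V - {v}. q u = v} = {a, b, c}"
    using nbrs(1) involution by (auto simp: q_def)
  then have "v_matching V E v ((\<lambda>u. {u, q u}) ` (V - {v}))"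
    using nbrs distinct involution
    by (intro v_matching_of_partner) (auto simp: q_def insert_commute)
  then show ?thesis using v unfolding lambda_matchable_def by blast
qed

definition connected_on :: "('a \<times> 'a) set \<Rightarrow> 'a set \<Rightarrow> bool" where
  "connected_on R S \<longleftrightarrow> (\<forall>u\<in>S. \<forall>w\<in>S. (u, w) \<in> R\<^sup>*)"

lemma connected_on_Un:
  assumes "sym R" "connected_on R A" "connected_on R B"
    and "A = {} \<or> B = {} \<or> (\<exists>x\<in>A. \<exists>y\<in>B. (x, y) \<in> R)"
  shows "connected_on R (A \<union> B)"
proof -
  have across: "(u, w) \<in> R\<^sup>*" if "u \<in> A" "w \<in> B" for u w
  proof -
    from assms(4) that obtain x y where "x \<in> A" "y \<in> B" "(x, y) \<in> R" by blast
    with assms(2,3) that show ?thesis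
      unfolding connected_on_def by (meson converse_rtrancl_into_rtrancl rtrancl_trans)
  qed
  have "(w, u) \<in> R\<^sup>*" if "(u, w) \<in> R\<^sup>*" for u w
    using that sym_rtrancl[OF assms(1)] by (auto dest: symD)
  then show ?thesis
    using assms(2,3) across unfolding connected_on_def by blast
qed

lemma connected_on_atLeastLessThan:
  fixes p q :: nat
  assumes "sym R" and step: "\<And>i. p \<le> i \<Longrightarrow> i + 1 < q \<Longrightarrow> (i, i + 1) \<in> R"
  shows "connected_on R {p..<q}"
proof -
  have from_p: "p \<le> i \<longrightarrow> i < q \<longrightarrow> (p, i) \<in> R\<^sup>*" for i
  proof (induction i)
    case (Suc i)
    then show ?case using step[of i] by (cases "p = Suc i") (auto intro: rtrancl_into_rtrancl)
  qed simp
  have "(i, p) \<in> R\<^sup>*" if "p \<le> i" "i < q" for i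
    using from_p[of i] that sym_rtrancl[OF assms(1)] by (auto dest: symD)
  then show ?thesis
    unfolding connected_on_def using from_p by (meson atLeastLessThan_iff rtrancl_trans)
qed

lemma card_less_3_obtain:
  fixes X :: "'a::linorder set"
  assumes "finite X" "X \<noteq> {}" "card X < 3"
  obtains a b where "a \<le> b" "X = {a, b}"
proof -
  have "card X = 1 \<or> card X = 2" using assms by (cases "card X") auto
  then show ?thesis
  proof
    assume "card X = 1"
    then obtain a where "X = {a}" by (auto simp: card_1_singleton_iff)
    then show ?thesis using that[of a a] by simp
  next
    assume "card X = 2"
    then obtain a b where "X = {a, b}" by (auto simp: card_2_iff)
    then show ?thesis using that[of a b] that[of b a] by (cases "a \<le> b") (auto simp: insert_commute)
  qed
qed

lemma sym_adj_rel: "sym (adj_rel V F)"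
  unfolding adj_rel_def sym_def by (auto simp: insert_commute)

locale cycle_with_crossing_chords =
  fixes N :: nat and E :: "nat set set"
  assumes cycle_edge: "\<And>i. i + 1 < N \<Longrightarrow> {i, i + 1} \<in> E"
    and closing_edge: "{N - 1, 0} \<in> E"
    and crossing_edge: "\<And>a b. a + 2 \<le> b \<Longrightarrow> b < N \<Longrightarrow> \<not> (a = 0 \<and> b = N - 1) \<Longrightarrow>
      \<exists>x y. a < x \<and> x < b \<and> (y < a \<or> b < y) \<and> y < N \<and> {x, y} \<in> E"
begin

lemma adj_rel_del_verticesI:
  "x \<in> {0..<N} - X \<Longrightarrow> y \<in> {0..<N} - X \<Longrightarrow> {x, y} \<in> E \<Longrightarrow>
    (x, y) \<in> adj_rel ({0..<N} - X) (del_vertices E X)"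
  unfolding adj_rel_def del_vertices_def by auto

lemma connected_on_arc:
  assumes "{p..<q} \<inter> X = {}" "q \<le> N"
  shows "connected_on (adj_rel ({0..<N} - X) (del_vertices E X)) {p..<q}"
proof (rule connected_on_atLeastLessThan[OF sym_adj_rel])
  fix i assume "p \<le> i" "i + 1 < q"
  then have "i \<in> {p..<q}" "i + 1 \<in> {p..<q}" by auto
  then have "i \<notin> X" "i + 1 \<notin> X" using assms(1) by blast+
  then show "(i, i + 1) \<in> adj_rel ({0..<N} - X) (del_vertices E X)"
    using assms(2) \<open>i + 1 < q\<close> by (intro adj_rel_del_verticesI cycle_edge) auto
qed

lemma connected_on_minus_pair:
  assumes ab: "a \<le> b" "b < N"
  defines "R \<equiv> adj_rel ({0..<N} - {a, b}) (del_vertices E {a, b})"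
  shows "connected_on R ({0..<N} - {a, b})"
proof -
  have sym: "sym R" unfolding R_def by (rule sym_adj_rel)
  have split: "{0..<N} - {a, b} = {a + 1..<b} \<union> ({b + 1..<N} \<union> {0..<a})"
    using ab by auto
  have inner: "connected_on R {a + 1..<b}"
    unfolding R_def using ab by (intro connected_on_arc) auto
  have outer: "connected_on R ({b + 1..<N} \<union> {0..<a})"
  proof (rule connected_on_Un[OF sym])
    show "connected_on R {b + 1..<N}" "connected_on R {0..<a}"
      unfolding R_def using ab by (auto intro: connected_on_arc)
    have "(N - 1, 0) \<in> R" if "b + 1 < N" "0 < a"
      unfolding R_def using that ab closing_edge by (intro adj_rel_del_verticesI) auto
    then show "{b + 1..<N} = {} \<or> {0..<a} = {} \<or> (\<exists>x\<in>{b + 1..<N}. \<exists>y\<in>{0..<a}. (x, y) \<in> R)"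
      by (cases "b + 1 < N \<and> 0 < a") force+
  qed
  have linked: "{a + 1..<b} = {} \<or> {b + 1..<N} \<union> {0..<a} = {} \<or>
      (\<exists>x\<in>{a + 1..<b}. \<exists>y\<in>{b + 1..<N} \<union> {0..<a}. (x, y) \<in> R)"
  proof (cases "a + 2 \<le> b \<and> \<not> (a = 0 \<and> b = N - 1)")
    case True
    then obtain x y where xy: "a < x" "x < b" "y < a \<or> b < y" "y < N" "{x, y} \<in> E"
      using crossing_edge ab by blast
    then have "(x, y) \<in> R"
      unfolding R_def using ab by (intro adj_rel_del_verticesI) auto
    then show ?thesis using xy by (intro disjI2) force
  qed (use ab in auto)
  show ?thesis
    unfolding split using connected_on_Un[OF sym inner outer linked] .
qed

lemma k_connected_3:
  assumes "3 < N"
  shows "k_connected 3 {0..<N} E"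
  unfolding k_connected_def
proof (intro conjI allI impI)
  show "card {0..<N} > 3" using assms by simp
  fix X assume X: "X \<subseteq> {0..<N} \<and> card X < 3"
  then have "finite X" by (meson finite_atLeastLessThan finite_subset)
  have "{0..<N} - X \<noteq> {}"
    using X card_mono[of X "{0..<N}"] assms by auto
  moreover have "connected_on (adj_rel ({0..<N} - X) (del_vertices E X)) ({0..<N} - X)"
  proof (cases "X = {}")
    case True
    then show ?thesis using connected_on_arc[of 0 N X] by simp
  next
    case False
    with \<open>finite X\<close> X obtain a b where "a \<le> b" "X = {a, b}"
      by (elim card_less_3_obtain) auto
    then show ?thesis using X connected_on_minus_pair by auto
  qed
  ultimately show "connected_graph ({0..<N} - X) (del_vertices E X)"
    unfolding connected_graph_def connected_on_def by blast
qed

end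

lemma nat_parity_cases:
  fixes v :: nat
  obtains k where "v = 2 * k" | k where "v = 2 * k + 1"
  by (metis evenE oddE)

locale witness_graph =
  fixes m :: nat
begin

abbreviation n :: nat where "n \<equiv> 2 * m + 12"

definition cyc_succ :: "nat \<Rightarrow> nat" where
  "cyc_succ v = (if v = 2 * m + 11 then 0 else v + 1)"

definition cyc_pred :: "nat \<Rightarrow> nat" where
  "cyc_pred v = (if v = 0 then 2 * m + 11 else v - 1)"

definition chord :: "nat \<Rightarrow> nat" where
  "chord v =
    (if v = 1 then 2 * m + 4 else if v = 2 * m + 4 then 1
     else if v = 2 * m + 2 then 2 * m + 9 else if v = 2 * m + 9 then 2 * m + 2
     else if v = 2 * m + 5 then 2 * m + 10 else if v = 2 * m + 10 then 2 * m + 5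
     else if v = 2 * m + 6 then 2 * m + 8 else if v = 2 * m + 8 then 2 * m + 6
     else if v = 2 * m + 7 then 2 * m + 11 else if v = 2 * m + 11 then 2 * m + 7
     else if even v then v + 3 else v - 3)"

definition verts :: "nat set" where
  "verts = {0..<n}"

definition edges :: "nat set set" where
  "edges = (\<lambda>v. {v, cyc_succ v}) ` verts \<union> (\<lambda>v. {v, chord v}) ` verts"

lemma chord_less: "v < n \<Longrightarrow> chord v < n"
  by (cases v rule: nat_parity_cases) (auto simp: chord_def)

lemma chord_chord: "v < n \<Longrightarrow> chord (chord v) = v"
  by (cases v rule: nat_parity_cases) (auto simp: chord_def, presburger+)

lemma neighbours_distinct:
  assumes "v < n"
  shows "cyc_succ v \<noteq> v" "cyc_pred v \<noteq> v" "chord v \<noteq> v"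
    and "cyc_succ v \<noteq> cyc_pred v" "chord v \<noteq> cyc_succ v" "chord v \<noteq> cyc_pred v"
  using assms by (cases v rule: nat_parity_cases; auto simp: cyc_succ_def cyc_pred_def chord_def)+

lemma cyc_succ_less: "v < n \<Longrightarrow> cyc_succ v < n"
  by (auto simp: cyc_succ_def)

lemma cyc_pred_less: "v < n \<Longrightarrow> cyc_pred v < n"
  by (auto simp: cyc_pred_def)

lemma cyc_succ_eq_iff: "u < n \<Longrightarrow> w < n \<Longrightarrow> u = cyc_succ w \<longleftrightarrow> w = cyc_pred u"
  by (auto simp: cyc_succ_def cyc_pred_def)

lemma chord_values:
  "chord 1 = 2 * m + 4" "chord (2 * m + 4) = 1"
  "chord (2 * m + 2) = 2 * m + 9" "chord (2 * m + 9) = 2 * m + 2"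
  "chord (2 * m + 5) = 2 * m + 10" "chord (2 * m + 10) = 2 * m + 5"
  "chord (2 * m + 6) = 2 * m + 8" "chord (2 * m + 8) = 2 * m + 6"
  "chord (2 * m + 7) = 2 * m + 11" "chord (2 * m + 11) = 2 * m + 7"
  by (simp_all add: chord_def)

lemma cycle_values:
  "cyc_succ (2 * m + 6) = 2 * m + 7" "cyc_pred (2 * m + 6) = 2 * m + 5"
  "cyc_succ (2 * m + 7) = 2 * m + 8" "cyc_pred (2 * m + 7) = 2 * m + 6"
  "cyc_succ (2 * m + 8) = 2 * m + 9" "cyc_pred (2 * m + 8) = 2 * m + 7"
  "cyc_succ (2 * m + 10) = 2 * m + 11" "cyc_pred (2 * m + 10) = 2 * m + 9"
  by (simp_all add: cyc_succ_def cyc_pred_def)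

lemma chord_ladder_even: "even x \<Longrightarrow> x \<le> 2 * m \<Longrightarrow> chord x = x + 3"
  by (auto simp: chord_def)

lemma chord_ladder_odd: "odd x \<Longrightarrow> 3 \<le> x \<Longrightarrow> x \<le> 2 * m + 3 \<Longrightarrow> chord x = x - 3"
  by (auto simp: chord_def)

lemma edge_iff:
  assumes "u < n" "w < n"
  shows "{u, w} \<in> edges \<longleftrightarrow> w = cyc_succ u \<or> w = cyc_pred u \<or> w = chord u"
proof
  assume "{u, w} \<in> edges"
  then obtain v where v: "v < n" "{u, w} = {v, cyc_succ v} \<or> {u, w} = {v, chord v}"
    by (auto simp: edges_def verts_def)
  then show "w = cyc_succ u \<or> w = cyc_pred u \<or> w = chord u"
    using cyc_succ_eq_iff[OF assms(1) v(1)] chord_chord[OF v(1)] by (auto simp: doubleton_eq_iff)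
next
  assume "w = cyc_succ u \<or> w = cyc_pred u \<or> w = chord u"
  moreover have "w = cyc_pred u \<Longrightarrow> {u, w} = {w, cyc_succ w}"
    using cyc_succ_eq_iff[OF assms] by auto
  ultimately show "{u, w} \<in> edges"
    using assms unfolding edges_def verts_def by (auto simp: insert_commute)
qed

lemma edgesE:
  assumes "e \<in> edges"
  obtains x where "x < n" "e = {x, cyc_succ x} \<or> e = {x, chord x}"
  using assms by (auto simp: edges_def verts_def)

lemma edges_memI:
  "u < n \<Longrightarrow> w < n \<Longrightarrow> w = u + 1 \<or> u = w + 1 \<or> {u, w} = {0, 2 * m + 11} \<or> w = chord u \<Longrightarrow>
    {u, w} \<in> edges"
  using edge_iff by (auto simp: cyc_succ_def cyc_pred_def doubleton_eq_iff)

lemma simple_graph: "simple_graph verts edges"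
  unfolding simple_graph_def verts_def edges_def
  using neighbours_distinct cyc_succ_less chord_less by fastforce

lemma neighbourhood:
  assumes "u < n"
  shows "{e \<in> edges. u \<in> e} = (\<lambda>w. {u, w}) ` {cyc_succ u, cyc_pred u, chord u}"
proof (intro equalityI subsetI)
  fix e assume "e \<in> {e \<in> edges. u \<in> e}"
  then have e: "e \<in> edges" "u \<in> e" by auto
  then obtain x y where "e = {x, y}" "x < n" "y < n"
    using simple_graph by (auto simp: verts_def elim: simple_graph_edgeE)
  then obtain w where "e = {u, w}" "w < n" using e(2) by (auto simp: insert_commute)
  then show "e \<in> (\<lambda>w. {u, w}) ` {cyc_succ u, cyc_pred u, chord u}"
    using e(1) edge_iff[OF assms] by auto
next
  fix e assume "e \<in> (\<lambda>w. {u, w}) ` {cyc_succ u, cyc_pred u, chord u}"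
  then show "e \<in> {e \<in> edges. u \<in> e}"
    using edge_iff[OF assms] cyc_succ_less[OF assms] cyc_pred_less[OF assms] chord_less[OF assms]
    by auto
qed

lemma degree_edges: "u < n \<Longrightarrow> degree edges u = 3"
proof -
  assume u: "u < n"
  have inj: "inj_on (\<lambda>w. {u, w}) {cyc_succ u, cyc_pred u, chord u}"
    by (auto simp: inj_on_def doubleton_eq_iff)
  have "card {cyc_succ u, cyc_pred u, chord u} = 3"
    using neighbours_distinct[OF u] by auto
  then show ?thesis
    unfolding degree_def neighbourhood[OF u] card_image[OF inj] .
qed

lemma cubic: "cubic verts edges"
  unfolding cubic_def using simple_graph degree_edges by (auto simp: verts_def)

lemma card_verts: "card verts = n"
  by (simp add: verts_def)

lemma not_bipartite: "\<not> bipartite verts edges"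
proof
  assume "bipartite verts edges"
  then obtain A where A: "\<And>e. e \<in> edges \<Longrightarrow> card (e \<inter> A) = 1"
    unfolding bipartite_def by blast
  have alternate: "x \<in> A \<longleftrightarrow> y \<notin> A" if "{x, y} \<in> edges" "x \<noteq> y" for x y
    using A[OF that(1)] that(2) by (cases "x \<in> A"; cases "y \<in> A") auto
  have "2 * m + 6 \<in> A \<longleftrightarrow> 2 * m + 7 \<notin> A" "2 * m + 7 \<in> A \<longleftrightarrow> 2 * m + 8 \<notin> A"
    "2 * m + 6 \<in> A \<longleftrightarrow> 2 * m + 8 \<notin> A"
    by (rule alternate; auto intro: edges_memI simp: chord_values)+
  then show False by blast
qed

lemma edge_neq_less:
  assumes "{v, x} \<in> edges"
  shows "x \<noteq> v" "x < n"
  using simple_graph_edgeE[OF simple_graph assms]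
  by (auto simp: verts_def doubleton_eq_iff)

lemma chord_crosses_ladder:
  assumes low: "a \<le> 2 * m + 1"
    and ab: "a + 2 \<le> b" "b < n" "\<not> (a = 0 \<and> b = 2 * m + 11)"
  shows "\<exists>x. a < x \<and> x < b \<and> (chord x < a \<or> b < chord x)"
proof -
  have "a = 0 \<and> b \<le> 2 * m + 2 \<or> a \<noteq> 0 \<and> even a \<or> odd a \<and> a + 3 \<le> b \<or>
      odd a \<and> b = a + 2 \<and> b \<le> 2 * m + 2 \<or> 2 * m + 3 \<le> b \<and> b \<le> 2 * m + 10"
    using low ab by presburger
  then consider (start) "a = 0" "b \<le> 2 * m + 2"
    | (even) "a \<noteq> 0" "even a"
    | (odd_far) "odd a" "a + 3 \<le> b"
    | (odd_near) "odd a" "b = a + 2" "b \<le> 2 * m + 2"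
    | (middle) "2 * m + 3 \<le> b" "b \<le> 2 * m + 10"
    by blast
  then show ?thesis
  proof cases
    case start
    then show ?thesis using ab chord_values(1) by (intro exI[of _ 1]) simp
  next
    case even
    have "odd (a + 1)" "3 \<le> a + 1" "a + 1 \<le> 2 * m + 3" using even low by presburger+
    then have "chord (a + 1) = a + 1 - 3" by (rule chord_ladder_odd)
    then show ?thesis using even ab by (intro exI[of _ "a + 1"]) simp
  next
    case odd_far
    have "odd (a + 2)" "3 \<le> a + 2" "a + 2 \<le> 2 * m + 3" using odd_far low by presburger+
    then have "chord (a + 2) = a + 2 - 3" by (rule chord_ladder_odd)
    then show ?thesis using odd_far by (intro exI[of _ "a + 2"]) (simp add: odd_pos)
  next
    case odd_near
    have "even (a + 1)" "a + 1 \<le> 2 * m" using odd_near by presburger+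
    then have "chord (a + 1) = a + 1 + 3" by (rule chord_ladder_even)
    then show ?thesis using odd_near by (intro exI[of _ "a + 1"]) simp
  next
    case middle
    show ?thesis
    proof (cases "b \<le> 2 * m + 8")
      case True
      then show ?thesis using middle low chord_values(3) by (intro exI[of _ "2 * m + 2"]) simp
    next
      case False
      then show ?thesis using middle low by (intro exI[of _ "2 * m + 7"]) (simp add: chord_values)
    qed
  qed
qed

lemma chord_crosses_gadget:
  assumes high: "2 * m + 2 \<le> a" and ab: "a + 2 \<le> b" "b < n"
  shows "\<exists>x. a < x \<and> x < b \<and> (chord x < a \<or> b < chord x)"
proof -
  have "2 * m + 10 \<le> b \<and> 2 * m + 3 \<le> a \<and> a \<le> 2 * m + 8 \<or> a = 2 * m + 2 \<or> a = 2 * m + 3 \<or>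
      a = 2 * m + 4 \<and> b \<le> 2 * m + 9 \<or> a = 2 * m + 5 \<and> b = 2 * m + 7 \<or>
      2 * m + 5 \<le> a \<and> a \<le> 2 * m + 6 \<and> 2 * m + 8 \<le> b \<and> b \<le> 2 * m + 9 \<or>
      a = 2 * m + 7 \<and> b = 2 * m + 9 \<or> a = 2 * m + 9"
    using high ab by presburger
  then consider (far) "2 * m + 10 \<le> b" "2 * m + 3 \<le> a" "a \<le> 2 * m + 8"
    | (a2) "a = 2 * m + 2" | (a3) "a = 2 * m + 3"
    | (a4) "a = 2 * m + 4" "b \<le> 2 * m + 9" | (a5) "a = 2 * m + 5" "b = 2 * m + 7"
    | (a56) "2 * m + 5 \<le> a" "a \<le> 2 * m + 6" "2 * m + 8 \<le> b" "b \<le> 2 * m + 9"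
    | (a7) "a = 2 * m + 7" "b = 2 * m + 9" | (a9) "a = 2 * m + 9"
    by blast
  then show ?thesis
  proof cases
    case far
    then show ?thesis using ab by (intro exI[of _ "2 * m + 9"]) (simp add: chord_values)
  next
    case a2
    then show ?thesis using ab chord_ladder_odd[of "2 * m + 3"] by (intro exI[of _ "2 * m + 3"]) simp
  next
    case a3
    then show ?thesis using ab by (intro exI[of _ "2 * m + 4"]) (simp add: chord_values)
  next
    case a4
    then show ?thesis using ab by (intro exI[of _ "2 * m + 5"]) (simp add: chord_values)
  next
    case a5
    then show ?thesis using ab by (intro exI[of _ "2 * m + 6"]) (simp add: chord_values)
  next
    case a56
    then show ?thesis using ab by (intro exI[of _ "2 * m + 7"]) (simp add: chord_values)
  next
    case a7
    then show ?thesis using ab by (intro exI[of _ "2 * m + 8"]) (simp add: chord_values)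
  next
    case a9
    then show ?thesis using ab by (intro exI[of _ "2 * m + 10"]) (simp add: chord_values)
  qed
qed

lemma chord_crosses:
  assumes "a + 2 \<le> b" "b < n" "\<not> (a = 0 \<and> b = 2 * m + 11)"
  shows "\<exists>x. a < x \<and> x < b \<and> (chord x < a \<or> b < chord x)"
proof (cases "a \<le> 2 * m + 1")
  case True
  then show ?thesis using assms by (rule chord_crosses_ladder)
next
  case False
  then have "2 * m + 2 \<le> a" by simp
  then show ?thesis using assms(1,2) by (rule chord_crosses_gadget)
qed

lemma k_connected_3_verts_edges: "k_connected 3 verts edges"
proof -
  interpret cycle_with_crossing_chords n edges
  proof
    show "{i, i + 1} \<in> edges" if "i + 1 < n" for i
      using that by (auto intro: edges_memI)
    show "{n - 1, 0} \<in> edges"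
      by (auto intro: edges_memI)
    fix a b assume ab: "a + 2 \<le> b" "b < n" "\<not> (a = 0 \<and> b = n - 1)"
    then have "\<not> (a = 0 \<and> b = 2 * m + 11)" by (simp add: add.commute)
    then obtain x where "a < x" "x < b" "chord x < a \<or> b < chord x"
      using chord_crosses ab(1,2) by blast
    moreover have "chord x < n" "{x, chord x} \<in> edges"
      using \<open>x < b\<close> \<open>b < n\<close> chord_less by (auto intro: edges_memI)
    ultimately show "\<exists>x y. a < x \<and> x < b \<and> (y < a \<or> b < y) \<and> y < n \<and> {x, y} \<in> edges"
      by blast
  qed
  show ?thesis unfolding verts_def by (rule k_connected_3) simp
qed

definition pair_up :: "nat \<Rightarrow> nat \<Rightarrow> nat" where
  "pair_up s u = (if even (u - s) then u + 1 else u - 1)"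

lemma pair_up_props:
  assumes "s \<le> u" "u \<le> t" "odd (t - s)"
  shows "s \<le> pair_up s u" "pair_up s u \<le> t" "pair_up s (pair_up s u) = u"
    and "pair_up s u = u + 1 \<or> u = pair_up s u + 1"
  using assms unfolding pair_up_def by presburger+

lemma lambda_matchableI:
  fixes q :: "nat \<Rightarrow> nat"
  assumes v: "v < n"
    and star: "{v, a} \<in> edges" "{v, b} \<in> edges" "{v, c} \<in> edges" "a \<noteq> b" "a \<noteq> c" "b \<noteq> c"
    and arc: "s \<le> t" "odd (t - s)" "t < n"
    and Q: "\<And>x. x \<in> Q \<Longrightarrow> q x \<in> Q \<and> q x \<noteq> x \<and> q (q x) = x \<and> {x, q x} \<in> edges"
    and cover: "{0..<n} - {v, a, b, c} = Q \<union> {s..t}" "Q \<inter> {s..t} = {}"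
  shows "lambda_matchable verts edges v"
proof -
  define p where "p u = (if u \<in> Q then q u else pair_up s u)" for u
  have involution: "p u \<in> verts - {v, a, b, c} \<and> p u \<noteq> u \<and> p (p u) = u \<and> {u, p u} \<in> edges"
    if u: "u \<in> verts - {v, a, b, c}" for u
  proof (cases "u \<in> Q")
    case True
    then show ?thesis using Q[of u] cover(1) by (simp add: p_def verts_def)
  next
    case False
    then have "u \<in> {s..t}" using u cover(1) by (auto simp: verts_def)
    then have pu: "p u \<in> {s..t}" "pair_up s (p u) = u" "p u = u + 1 \<or> u = p u + 1"
      using pair_up_props[OF _ _ arc(2)] False by (auto simp: p_def)
    then have "p u \<notin> Q" using cover(2) by blast
    then have "p (p u) = u" using pu(2) by (simp add: p_def)
    moreover have "p u \<in> verts - {v, a, b, c}" using pu(1) cover(1) by (auto simp: verts_def)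
    moreover have "{u, p u} \<in> edges"
      using pu(1,3) \<open>u \<in> {s..t}\<close> arc(3) by (intro edges_memI) auto
    ultimately show ?thesis using pu(3) by auto
  qed
  have "{a, b, c} \<subseteq> verts - {v}"
    using edge_neq_less[OF star(1)] edge_neq_less[OF star(2)] edge_neq_less[OF star(3)]
    by (auto simp: verts_def)
  with v show ?thesis
    by (intro lambda_matchable_of_involution[where p = p, OF _ _ star involution])
      (simp_all add: verts_def)
qed

lemma matchable_2m5: "lambda_matchable verts edges (2 * m + 5)"
  by (rule lambda_matchableI[where a = "2 * m + 4" and b = "2 * m + 6" and c = "2 * m + 10"
      and s = 0 and t = "2 * m + 3" and Q = "{2 * m + 7, 2 * m + 11, 2 * m + 8, 2 * m + 9}"
      and q = "\<lambda>x. if x = 2 * m + 7 then 2 * m + 11 else if x = 2 * m + 11 then 2 * m + 7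
        else if x = 2 * m + 8 then 2 * m + 9 else 2 * m + 8"])
    (auto intro!: edges_memI simp: chord_values)

lemma matchable_2m6: "lambda_matchable verts edges (2 * m + 6)"
  by (rule lambda_matchableI[where a = "2 * m + 5" and b = "2 * m + 7" and c = "2 * m + 8"
      and s = 1 and t = "2 * m + 4" and Q = "{2 * m + 9, 2 * m + 10, 2 * m + 11, 0}"
      and q = "\<lambda>x. if x = 2 * m + 9 then 2 * m + 10 else if x = 2 * m + 10 then 2 * m + 9
        else if x = 2 * m + 11 then 0 else 2 * m + 11"])
    (auto intro!: edges_memI simp: chord_values)

lemma matchable_2m7: "lambda_matchable verts edges (2 * m + 7)"
  by (rule lambda_matchableI[where a = "2 * m + 6" and b = "2 * m + 8" and c = "2 * m + 11"
      and s = 0 and t = "2 * m + 5" and Q = "{2 * m + 9, 2 * m + 10}"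
      and q = "\<lambda>x. if x = 2 * m + 9 then 2 * m + 10 else 2 * m + 9"])
    (auto intro!: edges_memI simp: chord_values)

lemma matchable_2m8: "lambda_matchable verts edges (2 * m + 8)"
  by (rule lambda_matchableI[where a = "2 * m + 7" and b = "2 * m + 9" and c = "2 * m + 6"
      and s = 0 and t = "2 * m + 5" and Q = "{2 * m + 10, 2 * m + 11}"
      and q = "\<lambda>x. if x = 2 * m + 10 then 2 * m + 11 else 2 * m + 10"])
    (auto intro!: edges_memI simp: chord_values)

lemma matchable_2m9: "lambda_matchable verts edges (2 * m + 9)"
proof (rule lambda_matchableI[where a = "2 * m + 8" and b = "2 * m + 10" and c = "2 * m + 2"
      and s = 0 and t = "2 * m + 1"
      and Q = "{2 * m + 7, 2 * m + 11, 2 * m + 3, 2 * m + 4, 2 * m + 5, 2 * m + 6}"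
      and q = "\<lambda>x. if x = 2 * m + 7 then 2 * m + 11 else if x = 2 * m + 11 then 2 * m + 7
        else if x = 2 * m + 3 then 2 * m + 4 else if x = 2 * m + 4 then 2 * m + 3
        else if x = 2 * m + 5 then 2 * m + 6 else 2 * m + 5"])
  show "{0..<n} - {2 * m + 9, 2 * m + 8, 2 * m + 10, 2 * m + 2} =
      {2 * m + 7, 2 * m + 11, 2 * m + 3, 2 * m + 4, 2 * m + 5, 2 * m + 6} \<union> {0..2 * m + 1}"
    by (rule set_eqI) (simp; presburger)
qed (auto intro!: edges_memI simp: chord_values)

lemma matchable_2m11: "lambda_matchable verts edges (2 * m + 11)"
  by (rule lambda_matchableI[where a = "2 * m + 10" and b = 0 and c = "2 * m + 7"
      and s = 1 and t = "2 * m + 6" and Q = "{2 * m + 8, 2 * m + 9}"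
      and q = "\<lambda>x. if x = 2 * m + 8 then 2 * m + 9 else 2 * m + 8"])
    (auto intro!: edges_memI simp: chord_values)

definition triangle :: "nat set" where
  "triangle = {2 * m + 6, 2 * m + 7, 2 * m + 8}"

definition alt :: "nat \<Rightarrow> int" where
  "alt x = (if even x then 1 else -1)"

definition tri_weight :: "int \<Rightarrow> nat \<Rightarrow> int" where
  "tri_weight d x = (if x \<in> triangle then d else alt x)"

lemma sum_alt: "(\<Sum>x<2 * k. alt x) = 0"
  by (induction k) (simp_all add: alt_def)

lemma sum_tri_weight: "(\<Sum>x\<in>verts. tri_weight d x) = 3 * d - 1"
proof -
  have split: "sum g verts = sum g (verts - triangle) + sum g triangle" for g :: "nat \<Rightarrow> int"
    by (rule sum.subset_diff) (auto simp: triangle_def verts_def)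
  have "(\<Sum>x\<in>verts - triangle. tri_weight d x) = (\<Sum>x\<in>verts - triangle. alt x)"
    by (rule sum.cong) (auto simp: tri_weight_def)
  moreover have "(\<Sum>x\<in>verts. alt x) = 0"
    using sum_alt[of "m + 6"] by (simp add: verts_def lessThan_atLeast0 algebra_simps)
  moreover have "(\<Sum>x\<in>triangle. tri_weight d x) = 3 * d" "(\<Sum>x\<in>triangle. alt x) = 1"
    by (simp_all add: triangle_def tri_weight_def alt_def)
  ultimately show ?thesis
    using split[of alt] split[of "tri_weight d"] by simp
qed

lemma alt_cyc_succ: "x < n \<Longrightarrow> alt x + alt (cyc_succ x) = 0"
  by (auto simp: cyc_succ_def alt_def)

lemma alt_chord:
  assumes "x \<notin> triangle" "chord x \<notin> triangle"
  shows "alt x + alt (chord x) = 0"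
proof (cases "x \<in> {1, 2 * m + 2, 2 * m + 4, 2 * m + 5, 2 * m + 9, 2 * m + 10, 2 * m + 11}")
  case True
  then show ?thesis using assms chord_values by (auto simp: alt_def triangle_def)
next
  case False
  with assms(1) have "chord x = (if even x then x + 3 else x - 3)"
    by (auto simp: chord_def triangle_def)
  moreover have "3 \<le> x" if "odd x"
    using False that by simp presburger
  ultimately show ?thesis by (simp add: alt_def)
qed

lemma triangle_boundary:
  assumes "{x, y} \<in> edges" "x \<in> triangle" "y \<notin> triangle"
  shows "odd y"
proof -
  have "x < n" "y < n" using edge_neq_less[OF assms(1)] assms(2) by (auto simp: triangle_def)
  then have "y = cyc_succ x \<or> y = cyc_pred x \<or> y = chord x"
    using assms(1) edge_iff by blast
  then show ?thesis
    using assms(2,3) by (auto simp: triangle_def cyc_succ_def cyc_pred_def chord_values)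
qed

lemma tri_weight_edge:
  assumes "e \<in> edges"
  shows "(\<Sum>x\<in>e. tri_weight d x) =
    (if e \<subseteq> triangle then 2 * d else if e \<inter> triangle = {} then 0 else d - 1)"
proof -
  obtain x where x: "x < n" "e = {x, cyc_succ x} \<or> e = {x, chord x}"
    using assms by (rule edgesE)
  then obtain y where y: "y = cyc_succ x \<or> y = chord x" "e = {x, y}"
    by blast
  have "x \<noteq> y" using neighbours_distinct[OF x(1)] y(1) by auto
  then have pair_sum: "(\<Sum>x\<in>e. tri_weight d x) = tri_weight d x + tri_weight d y"
    using y(2) by simp
  have "alt x + alt y = 0" if "x \<notin> triangle" "y \<notin> triangle"
    using y(1) alt_cyc_succ[OF x(1)] alt_chord that by blast
  moreover have "odd y" if "x \<in> triangle" "y \<notin> triangle"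
    using triangle_boundary assms y(2) that by blast
  moreover have "odd x" if "y \<in> triangle" "x \<notin> triangle"
    using triangle_boundary[of y x] assms y(2) that by (simp add: insert_commute)
  ultimately show ?thesis
    unfolding pair_sum by (auto simp: y(2) tri_weight_def alt_def)
qed

lemma even_not_lambda_matchable:
  assumes "v < n" "even v" "v \<notin> triangle"
  shows "\<not> lambda_matchable verts edges v"
proof (rule not_lambda_matchable_by_weights[OF simple_graph])
  show "(\<Sum>x\<in>e. tri_weight 0 x) \<le> 0" if "e \<in> edges" for e
    using tri_weight_edge[OF that, of 0] by simp
  show "(\<Sum>x\<in>verts. tri_weight 0 x) + 2 * tri_weight 0 v > 0"
    using assms sum_tri_weight[of 0] by (simp add: tri_weight_def alt_def)
qed

lemma v_matching_avoids_triangle: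
  assumes F: "v_matching verts edges v F" and v: "v \<le> 2 * m + 3" "odd v" and e: "e \<in> F"
  shows "\<not> e \<subseteq> triangle"
proof -
  have "v \<in> verts" using v by (simp add: verts_def)
  then have "(\<Sum>x\<in>e. tri_weight 1 x) = 0"
  proof (rule v_matching_zero_weight_edges[OF simple_graph _ F _ _ e])
    show "(\<Sum>x\<in>e'. tri_weight 1 x) \<ge> 0" if "e' \<in> edges" for e'
      using tri_weight_edge[OF that, of 1] by simp
    show "(\<Sum>x\<in>verts. tri_weight 1 x) + 2 * tri_weight 1 v = 0"
      using v sum_tri_weight[of 1] by (simp add: tri_weight_def alt_def triangle_def)
  qed
  moreover have "e \<in> edges" using F e by (auto simp: v_matching_def)
  ultimately show ?thesis using tri_weight_edge[of e 1] by auto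
qed

lemma v_matching_partner_adjacent:
  assumes F: "v_matching verts edges v F" and u: "u < n" "u \<noteq> v"
  shows "\<exists>w \<in> {cyc_succ u, cyc_pred u, chord u}. {u, w} \<in> F"
proof -
  have "u \<in> verts - {v}" using u by (simp add: verts_def)
  then obtain w where w: "{u, w} \<in> F" by (rule v_matching_obtain_partner[OF simple_graph F])
  moreover have "F \<subseteq> edges" using F by (simp add: v_matching_def)
  ultimately show ?thesis using edge_neq_less edge_iff[OF u(1)] by blast
qed

lemma odd_not_lambda_matchable:
  assumes v: "v \<le> 2 * m + 3" "odd v"
  shows "\<not> lambda_matchable verts edges v"
proof
  assume "lambda_matchable verts edges v"
  then obtain F where F: "v_matching verts edges v F"
    by (auto simp: lambda_matchable_def)
  note partner = v_matching_partner_adjacent[OF F] and no_triangle_edge = v_matching_avoids_triangle[OF F v]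
  have unique: "u = u'" if "{u, w} \<in> F" "{u', w} \<in> F" "w < n" "w \<noteq> v" for u u' w
    using v_matching_partner_unique[OF F] that by (auto simp: verts_def)
  have "{2 * m + 6, 2 * m + 5} \<in> F"
    using partner[of "2 * m + 6"] no_triangle_edge v
    by (auto simp: cycle_values chord_values triangle_def)
  then have "{2 * m + 10, 2 * m + 5} \<notin> F"
    using unique[of "2 * m + 10" "2 * m + 5" "2 * m + 6"] v by auto
  have "{2 * m + 7, 2 * m + 11} \<in> F"
    using partner[of "2 * m + 7"] no_triangle_edge v
    by (auto simp: cycle_values chord_values triangle_def)
  then have "{2 * m + 10, 2 * m + 11} \<notin> F"
    using unique[of "2 * m + 10" "2 * m + 11" "2 * m + 7"] v by auto
  have "{2 * m + 8, 2 * m + 9} \<in> F"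
    using partner[of "2 * m + 8"] no_triangle_edge v
    by (auto simp: cycle_values chord_values triangle_def)
  then have "{2 * m + 10, 2 * m + 9} \<notin> F"
    using unique[of "2 * m + 10" "2 * m + 9" "2 * m + 8"] v by auto
  show False
    using partner[of "2 * m + 10"] v \<open>{2 * m + 10, 2 * m + 5} \<notin> F\<close>
      \<open>{2 * m + 10, 2 * m + 11} \<notin> F\<close> \<open>{2 * m + 10, 2 * m + 9} \<notin> F\<close>
    by (auto simp: cycle_values chord_values)
qed

lemma lambda_matchable_iff:
  assumes "v \<in> verts"
  shows "lambda_matchable verts edges v \<longleftrightarrow>
    v \<in> {2 * m + 5, 2 * m + 6, 2 * m + 7, 2 * m + 8, 2 * m + 9, 2 * m + 11}"
proof
  assume matchable: "lambda_matchable verts edges v"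
  show "v \<in> {2 * m + 5, 2 * m + 6, 2 * m + 7, 2 * m + 8, 2 * m + 9, 2 * m + 11}"
  proof (cases "even v")
    case True
    then have "v \<in> triangle"
      using even_not_lambda_matchable assms matchable by (auto simp: verts_def)
    then show ?thesis by (auto simp: triangle_def)
  next
    case False
    then have "\<not> v \<le> 2 * m + 3" using odd_not_lambda_matchable matchable by blast
    moreover have "v < n" using assms by (simp add: verts_def)
    ultimately show ?thesis using False by simp presburger
  qed
next
  assume "v \<in> {2 * m + 5, 2 * m + 6, 2 * m + 7, 2 * m + 8, 2 * m + 9, 2 * m + 11}"
  then show "lambda_matchable verts edges v"
    using matchable_2m5 matchable_2m6 matchable_2m7 matchable_2m8 matchable_2m9 matchable_2m11
    by auto
qed

lemma lambda_num_verts_edges: "lambda_num verts edges = 6"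
proof -
  have "{v \<in> verts. lambda_matchable verts edges v} =
      {2 * m + 5, 2 * m + 6, 2 * m + 7, 2 * m + 8, 2 * m + 9, 2 * m + 11}"
    using lambda_matchable_iff by (auto simp: verts_def)
  then show ?thesis by (simp add: lambda_num_def)
qed

end

theorem proposition1p10:
  fixes n :: nat
  assumes "even n" and "n \<ge> 12"
  shows "\<exists>(V :: nat set) (E :: nat set set).
           simple_graph V E \<and> card V = n \<and> cubic V E \<and> k_connected 3 V E \<and>
           \<not> bipartite V E \<and> lambda_num V E = 6"
proof -
  obtain k where "n = 2 * k" using assms(1) by (rule evenE)
  then have n: "n = 2 * (k - 6) + 12" using assms(2) by simp
  interpret G: witness_graph "k - 6" .
  have "simple_graph G.verts G.edges \<and> card G.verts = n \<and> cubic G.verts G.edges \<and>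
      k_connected 3 G.verts G.edges \<and> \<not> bipartite G.verts G.edges \<and> lambda_num G.verts G.edges = 6"
    using G.simple_graph G.card_verts G.cubic G.k_connected_3_verts_edges G.not_bipartite
      G.lambda_num_verts_edges n
    by simp
  then show ?thesis by blast
qed

end
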